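(* Let $w\in\mathcal H(\mathbb D)$ with $w\not\equiv0$ and let $\varphi$ be an entire function with $\varphi\not\equiv0$. Then the weighted superposition operator $S_{\varphi,w}$ maps $H^\infty_{\log}$ into the Bloch space $\mathcal B$ if and only if $w\in\mathcal B$ and $\varphi$ is constant.
   Context: $\mathcal H(\mathbb D)$ is the space of analytic functions in the unit disc $\mathbb D$; $S_{\varphi,w}(f)(z)=w(z)\varphi(f(z))$. $H^\infty_{\log}$ is the space of $f\in\mathcal H(\mathbb D)$ with $\sup_{z\in\mathbb D}\big(\log\frac{e}{1-|z|}\big)^{-1}|f(z)|<\infty$, i.e. $|f(z)|=O\big(\log\frac1{1-|z|}\big)$ as $|z|\to1$. The Bloch space $\mathcal B$ consists of $f\in\mathcal H(\mathbb D)$ with $\sup_{z\in\mathbb D}(1-|z|^2)|f'(z)|<\infty$. *)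

theory Defs
  imports "HOL-Complex_Analysis.Complex_Analysis"
begin

text \<open>The unit disc is ball 0 1. Functions are total on complex; only values on the disc matter.\<close>

definition H_log_infty :: "(complex \<Rightarrow> complex) set" where
  "H_log_infty = {f. f holomorphic_on ball 0 1 \<and>
     (\<exists>C. \<forall>z\<in>ball 0 1. norm (f z) / ln (exp 1 / (1 - norm z)) \<le> C)}"

definition Bloch :: "(complex \<Rightarrow> complex) set" where
  "Bloch = {f. f holomorphic_on ball 0 1 \<and>
     (\<exists>C. \<forall>z\<in>ball 0 1. (1 - (norm z)\<^sup>2) * norm (deriv f z) \<le> C)}"

definition weighted_superposition ::
  "(complex \<Rightarrow> complex) \<Rightarrow> (complex \<Rightarrow> complex) \<Rightarrow> (complex \<Rightarrow> complex) \<Rightarrow> (complex \<Rightarrow> complex)" where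
  "weighted_superposition \<phi> w f = (\<lambda>z. w z * \<phi> (f z))"

end

theory Submission
  imports Defs
begin

text \<open>If \<open>\<phi> \<equiv> c\<close> then \<open>S f = c w\<close> for every \<open>f\<close>; conversely, the constant symbol \<open>f \<equiv> c\<close>
  with \<open>\<phi>(c) \<noteq> 0\<close> forces \<open>w\<close> into the Bloch space. Suppose \<open>\<phi>\<close> is not constant and pick \<open>c\<^sub>0\<close> with
  \<open>\<phi>'(c\<^sub>0) \<noteq> 0\<close>. By the maximum principle there are points \<open>a\<^sub>k\<close> tending to the circle with
  \<open>|w(a\<^sub>k)| \<ge> |w(z\<^sub>0)| > 0\<close>. If they approach the circle fast enough, a series \<open>F\<close> of rational
  blocks, the \<open>k\<close>-th one of height about \<open>10\<^sup>k\<close> and concentrated at \<open>a\<^sub>k\<close>, has logarithmic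
  growth, satisfies \<open>|F(a\<^sub>j)| \<le> 1/2\<close>, and \<open>(1 - |a\<^sub>j|\<^sup>2) |F'(a\<^sub>j)| \<ge> (2\<cdot>10\<^sup>j - 12)/3\<close>.
  For \<open>f = c\<^sub>0 + \<epsilon> F\<close> the term \<open>w \<phi>'(f) f'\<close> of \<open>(w \<cdot> \<phi> \<circ> f)'\<close> then makes
  \<open>(1 - |a\<^sub>j|\<^sup>2) |(w \<cdot> \<phi> \<circ> f)'(a\<^sub>j)|\<close> unbounded.\<close>

section \<open>Rational blocks\<close>

definition block :: "complex \<Rightarrow> complex \<Rightarrow> complex \<Rightarrow> complex \<Rightarrow> complex" where
  "block a p c z = of_real (1 - (cmod a)\<^sup>2) * (c * (z - a) - p * (1 - cnj a * z)) / (1 - cnj a * z)\<^sup>2"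

definition block' :: "complex \<Rightarrow> complex \<Rightarrow> complex \<Rightarrow> complex \<Rightarrow> complex" where
  "block' a p c z = of_real (1 - (cmod a)\<^sup>2) *
     ((c + p * cnj a) * (1 - cnj a * z) + 2 * cnj a * (c * (z - a) - p * (1 - cnj a * z))) /
     (1 - cnj a * z) ^ 3"

lemma has_field_derivative_block:
  assumes "1 - cnj a * z \<noteq> 0"
  shows "(block a p c has_field_derivative block' a p c z) (at z)"
proof -
  define u where "u = 1 - cnj a * z"
  have "(1 - cnj a * z)\<^sup>2 \<noteq> 0" using assms by simp
  show ?thesis
    unfolding block_def[abs_def] block'_def
    apply (rule derivative_eq_intros refl \<open>(1 - cnj a * z)\<^sup>2 \<noteq> 0\<close>)+
    apply (fold u_def)
    using assms[folded u_def] by (simp add: field_simps power2_eq_square power3_eq_cube)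
qed

lemma one_minus_cnj_mult_self: "1 - cnj a * a = of_real (1 - (cmod a)\<^sup>2)"
  using complex_norm_square[of a] by (simp add: mult.commute)

lemma norm_of_real_one_minus_norm_sq:
  assumes "cmod a \<le> 1"
  shows "cmod (of_real (1 - (cmod a)\<^sup>2) :: complex) = 1 - (cmod a)\<^sup>2"
  using assms abs_square_le_1[of "cmod a"] by (simp only: norm_of_real) simp

lemma block_at_center:
  assumes "cmod a < 1"
  shows "block a p c a = - p"
proof -
  define K :: complex where "K = of_real (1 - (cmod a)\<^sup>2)"
  have "K \<noteq> 0"
    unfolding K_def of_real_eq_0_iff using assms abs_square_less_1[of "cmod a"] by simp
  then show ?thesis unfolding block_def one_minus_cnj_mult_self K_def[symmetric]
    by (simp add: power2_eq_square)
qed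

lemma block'_at_center:
  assumes "cmod a < 1"
  shows "of_real (1 - (cmod a)\<^sup>2) * block' a p c a = c - p * cnj a"
proof -
  define K :: complex where "K = of_real (1 - (cmod a)\<^sup>2)"
  have "K \<noteq> 0"
    unfolding K_def of_real_eq_0_iff using assms abs_square_less_1[of "cmod a"] by simp
  then show ?thesis unfolding block'_def one_minus_cnj_mult_self K_def[symmetric]
    by (simp add: power3_eq_cube field_simps)
qed

lemma norm_one_minus_cnj_mult_ge:
  assumes "cmod a \<le> 1" "cmod z \<le> 1"
  shows "1 - cmod a \<le> cmod (1 - cnj a * z)" "1 - cmod z \<le> cmod (1 - cnj a * z)"
proof -
  have "1 - cmod a * cmod z \<le> cmod (1 - cnj a * z)"
    by (metis complex_mod_cnj norm_mult norm_one norm_triangle_ineq2)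
  moreover have "cmod a * cmod z \<le> cmod a" "cmod a * cmod z \<le> cmod z"
    using assms by (auto intro: mult_right_le_one_le mult_left_le_one_le)
  ultimately show "1 - cmod a \<le> cmod (1 - cnj a * z)" "1 - cmod z \<le> cmod (1 - cnj a * z)"
    by linarith+
qed

lemma norm_diff_le_norm_one_minus_cnj_mult:
  assumes "cmod a \<le> 1" "cmod z \<le> 1"
  shows "cmod (z - a) \<le> cmod (1 - cnj a * z)"
proof -
  have "(cmod (1 - cnj a * z))\<^sup>2 - (cmod (z - a))\<^sup>2 = (1 - (cmod a)\<^sup>2) * (1 - (cmod z)\<^sup>2)"
    unfolding cmod_power2 by (simp add: power2_eq_square algebra_simps)
  moreover have "0 \<le> (1 - (cmod a)\<^sup>2) * (1 - (cmod z)\<^sup>2)"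
    using assms by (intro mult_nonneg_nonneg) (simp_all add: abs_square_le_1)
  ultimately have "(cmod (z - a))\<^sup>2 \<le> (cmod (1 - cnj a * z))\<^sup>2" by linarith
  then show ?thesis by (rule power2_le_imp_le) simp
qed

lemma norm_block_numerator_le:
  assumes "cmod a \<le> 1" "cmod z \<le> 1"
  shows "cmod (c * (z - a) - p * (1 - cnj a * z)) \<le> (cmod c + cmod p) * cmod (1 - cnj a * z)"
proof -
  have "cmod (c * (z - a) - p * (1 - cnj a * z))
      \<le> cmod c * cmod (z - a) + cmod p * cmod (1 - cnj a * z)"
    by (metis norm_mult norm_triangle_ineq4)
  also have "\<dots> \<le> cmod c * cmod (1 - cnj a * z) + cmod p * cmod (1 - cnj a * z)"
    using norm_diff_le_norm_one_minus_cnj_mult[OF assms] by (intro add_right_mono mult_left_mono) auto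
  finally show ?thesis by (simp add: algebra_simps)
qed

lemma norm_block_le:
  assumes a: "cmod a < 1" and z: "cmod z \<le> 1"
  shows "cmod (block a p c z) \<le> (1 - (cmod a)\<^sup>2) * (cmod c + cmod p) / cmod (1 - cnj a * z)"
proof -
  define u where "u = 1 - cnj a * z"
  have u: "0 < cmod u" using norm_one_minus_cnj_mult_ge(1)[of a z] a z unfolding u_def by linarith
  have K: "0 \<le> 1 - (cmod a)\<^sup>2" using a by (simp add: abs_square_le_1)
  have "cmod (block a p c z) = (1 - (cmod a)\<^sup>2) * cmod (c * (z - a) - p * u) / (cmod u)\<^sup>2"
    using a unfolding block_def u_def[symmetric] norm_divide norm_mult norm_power
      norm_of_real_one_minus_norm_sq[OF less_imp_le[OF a]] by simp
  also have "\<dots> \<le> (1 - (cmod a)\<^sup>2) * ((cmod c + cmod p) * cmod u) / (cmod u)\<^sup>2"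
    using norm_block_numerator_le[of a z c p] a z K
    by (intro divide_right_mono mult_left_mono) (auto simp: u_def)
  also have "\<dots> = (1 - (cmod a)\<^sup>2) * (cmod c + cmod p) / cmod u"
    using u by (simp add: power2_eq_square)
  finally show ?thesis by (simp add: u_def)
qed

lemma norm_block'_le:
  assumes a: "cmod a < 1" and z: "cmod z \<le> 1"
  shows "cmod (block' a p c z) \<le> 3 * (1 - (cmod a)\<^sup>2) * (cmod c + cmod p) / (cmod (1 - cnj a * z))\<^sup>2"
proof -
  define u where "u = 1 - cnj a * z"
  define N where "N = c * (z - a) - p * u"
  have u: "0 < cmod u" using norm_one_minus_cnj_mult_ge(1)[of a z] a z unfolding u_def by linarith
  have K: "0 \<le> 1 - (cmod a)\<^sup>2" using a by (simp add: abs_square_le_1)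
  have N: "cmod N \<le> (cmod c + cmod p) * cmod u"
    unfolding N_def u_def using a z by (intro norm_block_numerator_le) auto
  have "cmod (c + p * cnj a) \<le> cmod c + cmod p * cmod a"
    by (metis complex_mod_cnj norm_mult norm_triangle_ineq)
  also have "\<dots> \<le> cmod c + cmod p" using a by (simp add: mult_left_le)
  finally have M1: "cmod ((c + p * cnj a) * u) \<le> (cmod c + cmod p) * cmod u"
    by (simp add: norm_mult mult_right_mono)
  have "cmod (2 * cnj a * N) \<le> 2 * 1 * ((cmod c + cmod p) * cmod u)"
    unfolding norm_mult using a N by (intro mult_mono) auto
  then have "cmod ((c + p * cnj a) * u + 2 * cnj a * N) \<le> 3 * ((cmod c + cmod p) * cmod u)"
    using M1 norm_triangle_ineq[of "(c + p * cnj a) * u" "2 * cnj a * N"] by linarith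
  then have "cmod (block' a p c z) \<le> (1 - (cmod a)\<^sup>2) * (3 * ((cmod c + cmod p) * cmod u)) / (cmod u) ^ 3"
    using K unfolding block'_def u_def[symmetric] N_def[symmetric] norm_divide norm_mult norm_power
      norm_of_real_one_minus_norm_sq[OF less_imp_le[OF a]] by (simp add: divide_right_mono mult_left_mono)
  also have "\<dots> = 3 * (1 - (cmod a)\<^sup>2) * (cmod c + cmod p) / (cmod u)\<^sup>2"
    using u by (simp add: power2_eq_square power3_eq_cube field_simps)
  finally show ?thesis by (simp add: u_def)
qed

lemma one_le_ln_exp_div:
  fixes t :: real
  assumes "0 < t" "t \<le> 1"
  shows "1 \<le> ln (exp 1 / t)"
  using assms by (simp add: ln_div)

lemma mult_ln_exp_div_mono:
  fixes s t :: real
  assumes "0 < s" "s \<le> t" "t \<le> 1"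
  shows "s * ln (exp 1 / s) \<le> t * ln (exp 1 / t)"
proof -
  have t: "0 < t" using assms by linarith
  have "ln (t / s) \<le> t / s - 1" using assms t by (intro ln_le_minus_one) auto
  then have "s * (ln t - ln s) \<le> s * (t / s - 1)"
    using assms t by (intro mult_left_mono) (auto simp: ln_div)
  then have "s * ln t - s * ln s \<le> t - s" using assms by (simp add: algebra_simps)
  moreover have "(t - s) * ln t \<le> 0" using assms t by (intro mult_nonneg_nonpos) auto
  ultimately show ?thesis using assms t by (simp add: ln_div algebra_simps)
qed

lemma norm_suminf_le_geometric:
  fixes f :: "nat \<Rightarrow> 'a::banach"
  assumes f: "\<And>n. norm (f n) \<le> C * (1/2)^n"
  shows "summable (\<lambda>n. norm (f n))" "norm (suminf f) \<le> 2 * C"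
proof -
  have g: "summable (\<lambda>n. C * (1/2::real)^n)" by (intro summable_mult) simp
  show s: "summable (\<lambda>n. norm (f n))"
    by (rule summable_comparison_test'[OF g]) (use f in simp)
  have "norm (suminf f) \<le> (\<Sum>n. norm (f n))" by (rule summable_norm[OF s])
  also have "\<dots> \<le> (\<Sum>n. C * (1/2::real)^n)" by (rule suminf_le[OF f s g])
  also have "\<dots> = 2 * C" by (simp add: suminf_mult suminf_geometric)
  finally show "norm (suminf f) \<le> 2 * C" .
qed

section \<open>The test function\<close>

text \<open>The correction \<open>p\<^sub>k\<close> cancels the earlier blocks at \<open>a\<^sub>k\<close>, so that the partial sum up to
  the \<open>k\<close>-th block vanishes there.\<close>

fun correction :: "(nat \<Rightarrow> complex) \<Rightarrow> nat \<Rightarrow> complex" where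
  "correction a k = (\<Sum>i<k. block (a i) (correction a i) (of_real (10 ^ i)) (a k))"

declare correction.simps [simp del]

definition test_block :: "(nat \<Rightarrow> complex) \<Rightarrow> nat \<Rightarrow> complex \<Rightarrow> complex" where
  "test_block a k = block (a k) (correction a k) (of_real (10 ^ k))"

definition test_block' :: "(nat \<Rightarrow> complex) \<Rightarrow> nat \<Rightarrow> complex \<Rightarrow> complex" where
  "test_block' a k = block' (a k) (correction a k) (of_real (10 ^ k))"

definition test_function :: "(nat \<Rightarrow> complex) \<Rightarrow> complex \<Rightarrow> complex" where
  "test_function a z = (\<Sum>k. test_block a k z)"

lemma correction_eq_sum_test_block: "correction a k = (\<Sum>i<k. test_block a i (a k))"
  by (simp add: test_block_def correction.simps[of a k])

text \<open>With \<open>x\<^sub>k = 1 - |a\<^sub>k|\<close>: the first growth condition makes the \<open>k\<close>-th block negligible near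
  \<open>a\<^sub>j\<close> for \<open>j < k\<close>; the second, \<open>10\<^sup>k \<le> 2\<^sup>-\<^sup>k log(e/x\<^sub>k)\<close>, keeps the blocks summable in
  \<open>H\<^sup>\<infinity>\<^sub>l\<^sub>o\<^sub>g\<close>.\<close>

locale lacunary_points =
  fixes a :: "nat \<Rightarrow> complex" and x :: "nat \<Rightarrow> real"
  assumes norm_a: "cmod (a k) = 1 - x k"
    and x_pos: "0 < x k"
    and x_Suc_le: "x (Suc k) * (16 * 20 ^ Suc k) \<le> x k"
    and pow_le_ln_x: "20 ^ k \<le> ln (exp 1 / x k)"
begin

lemma norm_a_less_1: "cmod (a k) < 1"
  using norm_a[of k] x_pos[of k] by linarith

lemma norm_a_le_1: "cmod (a k) \<le> 1"
  using norm_a_less_1 less_imp_le by blast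

lemma x_antimono:
  assumes "k \<le> j"
  shows "x j \<le> x k"
  using assms
proof (induction j rule: dec_induct)
  case (step n)
  have "x (Suc n) * 1 \<le> x (Suc n) * (16 * 20 ^ Suc n)"
    using x_pos[of "Suc n"] one_le_power[of "20::real" "Suc n"] by (intro mult_left_mono) auto
  then show ?case using x_Suc_le[of n] step.IH by linarith
qed simp

lemma one_minus_norm_a_sq_le: "1 - (cmod (a k))\<^sup>2 \<le> 2 * x k"
  unfolding norm_a by (simp add: power2_eq_square algebra_simps)

lemma ten_pow_le: "10 ^ k \<le> (1/2) ^ k * ln (exp 1 / x k)"
proof -
  have "(10::real) ^ k * 2 ^ k = 20 ^ k" by (simp flip: power_mult_distrib)
  then show ?thesis using pow_le_ln_x[of k] by (simp add: field_simps power_one_over)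
qed

lemma ten_pow_mult_x_le:
  assumes "j < k"
  shows "10 ^ k * x k \<le> x j * (1/2) ^ k / 16"
proof -
  obtain m where k: "k = Suc m" and "j \<le> m" using assms by (cases k) auto
  have "(20::real) ^ k = 10 ^ k * 2 ^ k" by (simp flip: power_mult_distrib)
  then have "10 ^ k * x k * 2 ^ k * 16 \<le> x m"
    using x_Suc_le[of m] unfolding k[symmetric] by (simp add: algebra_simps)
  then have "10 ^ k * x k \<le> x m * (1/2) ^ k / 16" by (simp add: field_simps power_one_over)
  also have "\<dots> \<le> x j * (1/2) ^ k / 16"
    using x_antimono[OF \<open>j \<le> m\<close>] by (intro divide_right_mono mult_right_mono) auto
  finally show ?thesis .
qed

lemma norm_block_a_le:
  assumes "cmod z \<le> 1"
  shows "cmod (block (a i) p c z) \<le> 2 * x i * (cmod c + cmod p) / cmod (1 - cnj (a i) * z)"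
proof -
  have "0 < cmod (1 - cnj (a i) * z)"
    using norm_one_minus_cnj_mult_ge(1)[OF norm_a_le_1 assms, of i] norm_a[of i] x_pos[of i] by linarith
  then have "(1 - (cmod (a i))\<^sup>2) * (cmod c + cmod p) / cmod (1 - cnj (a i) * z)
      \<le> 2 * x i * (cmod c + cmod p) / cmod (1 - cnj (a i) * z)"
    using one_minus_norm_a_sq_le[of i] by (intro divide_right_mono mult_right_mono) auto
  with norm_block_le[OF norm_a_less_1 assms, of i p c] show ?thesis by linarith
qed

lemma norm_block_a_le_const:
  assumes "cmod z \<le> 1"
  shows "cmod (block (a i) p c z) \<le> 2 * (cmod c + cmod p)"
proof -
  have u: "x i \<le> cmod (1 - cnj (a i) * z)"
    using norm_one_minus_cnj_mult_ge(1)[OF norm_a_le_1 assms, of i] norm_a[of i] by linarith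
  then have "0 < cmod (1 - cnj (a i) * z)" using x_pos[of i] by linarith
  have "cmod (block (a i) p c z) \<le> 2 * x i * (cmod c + cmod p) / cmod (1 - cnj (a i) * z)"
    by (rule norm_block_a_le[OF assms])
  also have "\<dots> \<le> 2 * x i * (cmod c + cmod p) / x i"
    using u x_pos[of i] \<open>0 < cmod (1 - cnj (a i) * z)\<close> by (intro divide_left_mono mult_pos_pos) auto
  finally show ?thesis using x_pos[of i] by simp
qed

lemma norm_correction_le: "cmod (correction a k) \<le> 10 ^ k / 3"
proof (induction k rule: less_induct)
  case (less k)
  have "cmod (correction a k) \<le> (\<Sum>i<k. cmod (block (a i) (correction a i) (of_real (10 ^ i)) (a k)))"
    unfolding correction.simps[of a k] by (rule norm_sum)
  also have "\<dots> \<le> (\<Sum>i<k. (8/3) * 10 ^ i)"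
  proof (rule sum_mono)
    fix i assume "i \<in> {..<k}"
    then have "2 * (cmod (of_real (10 ^ i) :: complex) + cmod (correction a i)) \<le> (8/3) * 10 ^ i"
      using less.IH[of i] by (simp add: norm_power)
    then show "cmod (block (a i) (correction a i) (of_real (10 ^ i)) (a k)) \<le> (8/3) * 10 ^ i"
      by (rule order_trans[OF norm_block_a_le_const[OF norm_a_le_1]])
  qed
  also have "\<dots> = (8/3) * (\<Sum>i<k. 10 ^ i)" by (simp add: sum_distrib_left)
  also have "\<dots> = (8/27) * (10 ^ k - 1)" by (simp add: geometric_sum)
  also have "\<dots> \<le> 10 ^ k / 3" by (simp add: field_simps)
  finally show ?case .
qed

lemma norm_coefficients_le: "cmod (of_real (10 ^ k) :: complex) + cmod (correction a k) \<le> 2 * 10 ^ k"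
proof -
  have "cmod (of_real (10 ^ k) :: complex) = 10 ^ k" by (simp add: norm_power)
  then show ?thesis using norm_correction_le[of k] norm_ge_zero[of "correction a k"] by linarith
qed

lemma norm_test_block_le:
  assumes "cmod z < 1"
  shows "cmod (test_block a k z) \<le> 4 * 10 ^ k * x k / max (x k) (1 - cmod z)"
proof -
  have u: "max (x k) (1 - cmod z) \<le> cmod (1 - cnj (a k) * z)"
    using norm_one_minus_cnj_mult_ge[OF norm_a_le_1 less_imp_le[OF assms], of k] norm_a[of k] by simp
  have m: "0 < max (x k) (1 - cmod z)" using x_pos[of k] by (simp add: max_def)
  with u have u': "0 < cmod (1 - cnj (a k) * z)" by linarith
  have "cmod (test_block a k z)
      \<le> 2 * x k * (cmod (of_real (10 ^ k) :: complex) + cmod (correction a k)) / cmod (1 - cnj (a k) * z)"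
    unfolding test_block_def by (rule norm_block_a_le) (use assms in simp)
  also have "\<dots> \<le> 2 * x k * (2 * 10 ^ k) / cmod (1 - cnj (a k) * z)"
    using norm_coefficients_le[of k] x_pos[of k] u m by (intro divide_right_mono mult_left_mono) auto
  also have "\<dots> \<le> 2 * x k * (2 * 10 ^ k) / max (x k) (1 - cmod z)"
    using u m u' x_pos[of k] by (intro divide_left_mono mult_pos_pos) auto
  finally show ?thesis by (simp add: algebra_simps)
qed

lemma norm_test_block_le_ln:
  assumes z: "cmod z < 1"
  shows "cmod (test_block a k z) \<le> 4 * ln (exp 1 / (1 - cmod z)) * (1/2) ^ k"
proof (cases "1 - cmod z \<le> x k")
  case True
  have "cmod (test_block a k z) \<le> 4 * 10 ^ k"
    using norm_test_block_le[OF z, of k] True x_pos[of k] by (simp add: max_def)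
  also have "\<dots> \<le> 4 * ((1/2) ^ k * ln (exp 1 / x k))" using ten_pow_le[of k] by simp
  also have "\<dots> \<le> 4 * ((1/2) ^ k * ln (exp 1 / (1 - cmod z)))"
    using True z x_pos[of k] by (intro mult_left_mono ln_mono divide_left_mono) auto
  finally show ?thesis by (metis mult.assoc mult.commute)
next
  case False
  then have d: "0 < 1 - cmod z" "x k \<le> 1 - cmod z" "1 - cmod z \<le> 1" using z by auto
  have "cmod (test_block a k z) \<le> 4 * 10 ^ k * x k / (1 - cmod z)"
    using norm_test_block_le[OF z, of k] False by (simp add: max_def)
  also have "\<dots> \<le> 4 * (1/2) ^ k * (x k * ln (exp 1 / x k)) / (1 - cmod z)"
    using ten_pow_le[of k] x_pos[of k] d by (intro divide_right_mono) (auto intro: mult_right_mono)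
  also have "\<dots> \<le> 4 * (1/2) ^ k * ((1 - cmod z) * ln (exp 1 / (1 - cmod z))) / (1 - cmod z)"
    using mult_ln_exp_div_mono[OF x_pos d(2,3)] d by (intro divide_right_mono mult_left_mono) auto
  also have "\<dots> = 4 * ln (exp 1 / (1 - cmod z)) * (1/2) ^ k" using d by simp
  finally show ?thesis .
qed

lemma norm_test_block'_le:
  assumes "cmod z \<le> 1"
  shows "cmod (test_block' a k z) \<le> 12 * 10 ^ k * x k / (cmod (1 - cnj (a k) * z))\<^sup>2"
proof -
  have "cmod (test_block' a k z)
      \<le> 3 * (1 - (cmod (a k))\<^sup>2) * (cmod (of_real (10 ^ k) :: complex) + cmod (correction a k)) /
        (cmod (1 - cnj (a k) * z))\<^sup>2"
    unfolding test_block'_def by (rule norm_block'_le[OF norm_a_less_1 assms])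
  also have "\<dots> \<le> 3 * (2 * x k) * (2 * 10 ^ k) / (cmod (1 - cnj (a k) * z))\<^sup>2"
    using one_minus_norm_a_sq_le[of k] norm_coefficients_le[of k] x_pos[of k]
    by (intro divide_right_mono mult_mono mult_left_mono) auto
  finally show ?thesis by (simp add: algebra_simps)
qed

lemma has_field_derivative_test_block:
  assumes "cmod z < 1"
  shows "(test_block a k has_field_derivative test_block' a k z) (at z)"
proof -
  have "x k \<le> cmod (1 - cnj (a k) * z)"
    using norm_one_minus_cnj_mult_ge(1)[OF norm_a_le_1, of z k] norm_a[of k] assms by simp
  then have "cmod (1 - cnj (a k) * z) \<noteq> 0" using x_pos[of k] by linarith
  then show ?thesis unfolding test_block_def test_block'_def by (intro has_field_derivative_block) simp
qed

lemma test_block_locally_summable: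
  assumes "w \<in> ball 0 1"
  shows "\<exists>d h. 0 < d \<and> summable h \<and>
    (\<forall>\<^sub>F k in sequentially. \<forall>z\<in>ball w d \<inter> ball 0 1. norm (test_block a k z) \<le> h k)"
proof (intro exI conjI)
  define d where "d = (1 - cmod w) / 2"
  show "0 < d" using assms by (simp add: d_def)
  show "summable (\<lambda>k. 4 * ln (exp 1 / d) * (1/2::real) ^ k)" by (intro summable_mult) simp
  show "\<forall>\<^sub>F k in sequentially. \<forall>z\<in>ball w d \<inter> ball 0 1.
      norm (test_block a k z) \<le> 4 * ln (exp 1 / d) * (1/2) ^ k"
  proof (intro always_eventually allI ballI)
    fix k z assume z: "z \<in> ball w d \<inter> ball 0 1"
    have "cmod z \<le> cmod w + dist w z"
      by (metis dist_norm norm_minus_commute norm_triangle_sub)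
    then have "d \<le> 1 - cmod z" using z assms by (simp add: d_def)
    then have "ln (exp 1 / (1 - cmod z)) \<le> ln (exp 1 / d)"
      using \<open>0 < d\<close> by (intro ln_mono divide_left_mono) auto
    then have "4 * ln (exp 1 / (1 - cmod z)) * (1/2) ^ k \<le> 4 * ln (exp 1 / d) * (1/2) ^ k"
      by (intro mult_right_mono) auto
    moreover have "cmod z < 1" using z by simp
    ultimately show "norm (test_block a k z) \<le> 4 * ln (exp 1 / d) * (1/2) ^ k"
      using norm_test_block_le_ln[of z k] by linarith
  qed
qed

lemma test_function_has_field_derivative:
  assumes "cmod z < 1"
  shows "summable (\<lambda>k. test_block' a k z)"
    and "(test_function a has_field_derivative (\<Sum>k. test_block' a k z)) (at z)"
proof -
  obtain g g' where g: "\<And>y. y \<in> ball 0 1 \<Longrightarrow> ((\<lambda>k. test_block a k y) sums g y) \<and>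
      ((\<lambda>k. test_block' a k y) sums g' y) \<and> (g has_field_derivative g' y) (at y)"
    using series_and_derivative_comparison_local[OF open_ball _ test_block_locally_summable]
      has_field_derivative_test_block by (metis mem_ball_0)
  have z: "z \<in> ball 0 1" using assms by simp
  show "summable (\<lambda>k. test_block' a k z)" using g[OF z] summable_def by blast
  have "(test_function a has_field_derivative g' z) (at z)"
  proof (rule has_field_derivative_transform_within_open[OF _ open_ball z])
    show "(g has_field_derivative g' z) (at z)" using g[OF z] by blast
    show "g y = test_function a y" if "y \<in> ball 0 1" for y
      using g[OF that] unfolding test_function_def by (metis sums_unique)
  qed
  moreover have "g' z = (\<Sum>k. test_block' a k z)" using g[OF z] by (metis sums_unique)
  ultimately show "(test_function a has_field_derivative (\<Sum>k. test_block' a k z)) (at z)" by simp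
qed

lemma holomorphic_test_function: "test_function a holomorphic_on ball 0 1"
  unfolding holomorphic_on_open[OF open_ball] by (meson test_function_has_field_derivative(2) mem_ball_0)

lemma test_function_in_H_log_infty: "test_function a \<in> H_log_infty"
  unfolding H_log_infty_def
proof (intro CollectI conjI exI ballI holomorphic_test_function)
  fix z :: complex assume "z \<in> ball 0 1"
  then have z: "cmod z < 1" by simp
  have "cmod (test_function a z) \<le> 2 * (4 * ln (exp 1 / (1 - cmod z)))"
    unfolding test_function_def by (rule norm_suminf_le_geometric(2)[OF norm_test_block_le_ln[OF z]])
  moreover have "1 \<le> ln (exp 1 / (1 - cmod z))" by (rule one_le_ln_exp_div) (use z in auto)
  ultimately show "cmod (test_function a z) / ln (exp 1 / (1 - cmod z)) \<le> 8"
    by (simp add: pos_divide_le_eq)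
qed

lemma norm_test_block_at_earlier_point:
  assumes "j < k"
  shows "cmod (test_block a k (a j)) \<le> (1/4) * (1/2) ^ k"
proof -
  have "cmod (test_block a k (a j)) \<le> 4 * 10 ^ k * x k / max (x k) (1 - cmod (a j))"
    by (rule norm_test_block_le[OF norm_a_less_1])
  also have "\<dots> \<le> 4 * 10 ^ k * x k / x j"
    using x_pos[of j] x_pos[of k] norm_a[of j] by (intro divide_left_mono) auto
  also have "\<dots> \<le> 4 * (x j * (1/2) ^ k / 16) / x j"
    using ten_pow_mult_x_le[OF assms] x_pos[of j] by (intro divide_right_mono) (simp_all add: mult.assoc)
  also have "\<dots> = (1/4) * (1/2) ^ k" using x_pos[of j] by simp
  finally show ?thesis .
qed

lemma norm_test_function_at_a: "cmod (test_function a (a j)) \<le> 1/2"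
proof -
  have s: "summable (\<lambda>k. test_block a k (a j))"
    by (rule summable_norm_cancel[OF norm_suminf_le_geometric(1)[OF norm_test_block_le_ln[OF norm_a_less_1]]])
  have "(\<Sum>i<Suc j. test_block a i (a j)) = 0"
    using block_at_center[OF norm_a_less_1, of j "correction a j"]
    by (simp add: correction_eq_sum_test_block[of a j] test_block_def[of a j])
  then have "test_function a (a j) = (\<Sum>n. test_block a (n + Suc j) (a j))"
    unfolding test_function_def using suminf_split_initial_segment[OF s, of "Suc j"] by simp
  moreover have "cmod (test_block a (n + Suc j) (a j)) \<le> (1/4) * (1/2) ^ n" for n
  proof -
    have "cmod (test_block a (n + Suc j) (a j)) \<le> (1/4) * (1/2) ^ (n + Suc j)"
      by (rule norm_test_block_at_earlier_point) simp
    also have "\<dots> \<le> (1/4) * (1/2) ^ n" by (intro mult_left_mono power_decreasing) auto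
    finally show ?thesis .
  qed
  ultimately show ?thesis using norm_suminf_le_geometric(2) by fastforce
qed

lemma weighted_norm_test_block'_before:
  assumes "i < j"
  shows "(1 - (cmod (a j))\<^sup>2) * cmod (test_block' a i (a j)) \<le> (1/2) ^ Suc i"
proof -
  have u: "x i \<le> cmod (1 - cnj (a i) * a j)"
    using norm_one_minus_cnj_mult_ge(1)[OF norm_a_le_1[of i] norm_a_le_1[of j]] norm_a[of i] by linarith
  have "cmod (test_block' a i (a j)) \<le> 12 * 10 ^ i * x i / (cmod (1 - cnj (a i) * a j))\<^sup>2"
    by (rule norm_test_block'_le[OF norm_a_le_1])
  also have "\<dots> \<le> 12 * 10 ^ i * x i / (x i)\<^sup>2"
    using u x_pos[of i] by (intro divide_left_mono power_mono mult_pos_pos) auto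
  finally have B: "cmod (test_block' a i (a j)) \<le> 12 * 10 ^ i / x i"
    using x_pos[of i] by (simp add: power2_eq_square)
  have "10 ^ Suc i * x j \<le> 10 ^ Suc i * x (Suc i)"
    using x_antimono[of "Suc i" j] assms by (intro mult_left_mono) auto
  also have "\<dots> \<le> x i * (1/2) ^ Suc i / 16" by (rule ten_pow_mult_x_le) simp
  finally have t: "10 ^ Suc i * x j \<le> x i * (1/2) ^ Suc i / 16" .
  have "(1 - (cmod (a j))\<^sup>2) * cmod (test_block' a i (a j)) \<le> 2 * x j * (12 * 10 ^ i / x i)"
    using B one_minus_norm_a_sq_le[of j] x_pos[of j] by (intro mult_mono) auto
  also have "\<dots> = (12/5) * (10 ^ Suc i * x j) / x i" by simp
  also have "\<dots> \<le> (12/5) * (x i * (1/2) ^ Suc i / 16) / x i"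
    using t x_pos[of i] by (intro divide_right_mono mult_left_mono) auto
  also have "\<dots> \<le> (1/2) ^ Suc i" using x_pos[of i] by simp
  finally show ?thesis .
qed

lemma weighted_norm_test_block'_after:
  assumes "j < k"
  shows "(1 - (cmod (a j))\<^sup>2) * cmod (test_block' a k (a j)) \<le> (3/2) * (1/2) ^ k"
proof -
  have u: "x j \<le> cmod (1 - cnj (a k) * a j)"
    using norm_one_minus_cnj_mult_ge(2)[OF norm_a_le_1[of k] norm_a_le_1[of j]] norm_a[of j] by linarith
  have "cmod (test_block' a k (a j)) \<le> 12 * 10 ^ k * x k / (cmod (1 - cnj (a k) * a j))\<^sup>2"
    by (rule norm_test_block'_le[OF norm_a_le_1])
  also have "\<dots> \<le> 12 * 10 ^ k * x k / (x j)\<^sup>2"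
    using u x_pos[of j] x_pos[of k] by (intro divide_left_mono power_mono mult_pos_pos) auto
  finally have B: "cmod (test_block' a k (a j)) \<le> 12 * (10 ^ k * x k) / (x j)\<^sup>2"
    by (simp add: mult.assoc)
  have "(1 - (cmod (a j))\<^sup>2) * cmod (test_block' a k (a j)) \<le> 2 * x j * (12 * (10 ^ k * x k) / (x j)\<^sup>2)"
    using B one_minus_norm_a_sq_le[of j] x_pos[of j] by (intro mult_mono) auto
  also have "\<dots> = 24 * (10 ^ k * x k) / x j" using x_pos[of j] by (simp add: power2_eq_square)
  also have "\<dots> \<le> 24 * (x j * (1/2) ^ k / 16) / x j"
    using ten_pow_mult_x_le[OF assms] x_pos[of j] by (intro divide_right_mono mult_left_mono) auto
  also have "\<dots> = (3/2) * (1/2) ^ k" using x_pos[of j] by simp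
  finally show ?thesis .
qed

lemma weighted_norm_test_block'_diagonal:
  "2 * 10 ^ j \<le> 3 * ((1 - (cmod (a j))\<^sup>2) * cmod (test_block' a j (a j)))"
proof -
  have "cmod (correction a j * cnj (a j)) \<le> cmod (correction a j)"
    using norm_a_le_1[of j] by (simp add: norm_mult mult_left_le)
  then have p: "3 * cmod (correction a j * cnj (a j)) \<le> 10 ^ j" using norm_correction_le[of j] by simp
  have "10 ^ j - cmod (correction a j * cnj (a j)) \<le> cmod (of_real (10 ^ j) - correction a j * cnj (a j))"
    using norm_triangle_ineq2[of "of_real (10 ^ j)" "correction a j * cnj (a j)"] by (simp add: norm_power)
  also have "\<dots> = (1 - (cmod (a j))\<^sup>2) * cmod (test_block' a j (a j))"
    using block'_at_center[OF norm_a_less_1, of j "correction a j" "of_real (10 ^ j)"]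
    unfolding test_block'_def by (metis norm_mult norm_of_real_one_minus_norm_sq[OF norm_a_le_1])
  finally show ?thesis using p by linarith
qed

lemma weighted_norm_sum_test_block'_before:
  "(1 - (cmod (a j))\<^sup>2) * cmod (\<Sum>i<j. test_block' a i (a j)) \<le> 1"
proof -
  have K: "0 \<le> 1 - (cmod (a j))\<^sup>2" using norm_a_le_1[of j] by (simp add: abs_square_le_1)
  then have "(1 - (cmod (a j))\<^sup>2) * cmod (\<Sum>i<j. test_block' a i (a j))
      \<le> (\<Sum>i<j. (1 - (cmod (a j))\<^sup>2) * cmod (test_block' a i (a j)))"
    by (simp add: sum_distrib_left[symmetric] mult_left_mono norm_sum)
  also have "\<dots> \<le> (\<Sum>i<j. (1/2::real) ^ Suc i)"
    by (intro sum_mono weighted_norm_test_block'_before) simp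
  also have "\<dots> = 1 - (1/2) ^ j" by (induction j) (auto simp: field_simps)
  also have "\<dots> \<le> 1" by simp
  finally show ?thesis .
qed

lemma weighted_norm_suminf_test_block'_after:
  "(1 - (cmod (a j))\<^sup>2) * cmod (\<Sum>n. test_block' a (n + Suc j) (a j)) \<le> 3"
proof -
  define K where "K = 1 - (cmod (a j))\<^sup>2"
  have K: "0 < K" using norm_a_less_1[of j] by (simp add: K_def abs_square_less_1)
  have "cmod (test_block' a (n + Suc j) (a j)) \<le> (3 / (2 * K)) * (1/2) ^ n" for n
  proof -
    have "K * cmod (test_block' a (n + Suc j) (a j)) \<le> (3/2) * (1/2) ^ (n + Suc j)"
      unfolding K_def by (rule weighted_norm_test_block'_after) simp
    also have "\<dots> \<le> (3/2) * (1/2) ^ n" by (intro mult_left_mono power_decreasing) auto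
    finally show ?thesis using K by (simp add: field_simps)
  qed
  then have "cmod (\<Sum>n. test_block' a (n + Suc j) (a j)) \<le> 2 * (3 / (2 * K))"
    by (rule norm_suminf_le_geometric(2))
  then show ?thesis using K unfolding K_def[symmetric] by (simp add: field_simps)
qed

lemma deriv_test_function_at_a:
  "2 * 10 ^ j - 12 \<le> 3 * ((1 - (cmod (a j))\<^sup>2) * cmod (deriv (test_function a) (a j)))"
proof -
  define K where "K = 1 - (cmod (a j))\<^sup>2"
  define B where "B = (\<lambda>k. test_block' a k (a j))"
  have K: "0 \<le> K" using norm_a_le_1[of j] by (simp add: K_def abs_square_le_1)
  have s: "summable B" unfolding B_def by (rule test_function_has_field_derivative(1)[OF norm_a_less_1])
  have "deriv (test_function a) (a j) = (\<Sum>k. B k)"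
    unfolding B_def by (rule DERIV_imp_deriv[OF test_function_has_field_derivative(2)[OF norm_a_less_1]])
  also have "\<dots> = (\<Sum>n. B (n + Suc j)) + (\<Sum>i<j. B i) + B j"
    using suminf_split_initial_segment[OF s, of "Suc j"] by simp
  finally have Bj: "B j = deriv (test_function a) (a j) - (\<Sum>i<j. B i) - (\<Sum>n. B (n + Suc j))"
    by (simp add: algebra_simps)
  have "cmod (B j) \<le> cmod (deriv (test_function a) (a j)) + cmod (\<Sum>i<j. B i) + cmod (\<Sum>n. B (n + Suc j))"
    using norm_triangle_ineq4[of "deriv (test_function a) (a j) - (\<Sum>i<j. B i)" "\<Sum>n. B (n + Suc j)"]
      norm_triangle_ineq4[of "deriv (test_function a) (a j)" "\<Sum>i<j. B i"] unfolding Bj by linarith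
  from mult_left_mono[OF this K]
  have "K * cmod (B j)
      \<le> K * cmod (deriv (test_function a) (a j)) + K * cmod (\<Sum>i<j. B i) + K * cmod (\<Sum>n. B (n + Suc j))"
    by (simp add: distrib_left)
  then show ?thesis
    using weighted_norm_test_block'_diagonal[of j] weighted_norm_sum_test_block'_before[of j]
      weighted_norm_suminf_test_block'_after[of j]
    unfolding K_def B_def by linarith
qed

end

section \<open>Choice of the points\<close>

fun lacunary_gaps :: "real \<Rightarrow> nat \<Rightarrow> real" where
  "lacunary_gaps r 0 = r"
| "lacunary_gaps r (Suc k) = min (lacunary_gaps r k / (16 * 20 ^ Suc k)) (exp (1 - 20 ^ Suc k))"

lemma lacunary_gaps_pos: "0 < r \<Longrightarrow> 0 < lacunary_gaps r k"
  by (induction k) auto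

lemma lacunary_gaps_Suc_le: "lacunary_gaps r (Suc k) * (16 * 20 ^ Suc k) \<le> lacunary_gaps r k"
proof -
  have "lacunary_gaps r (Suc k) \<le> lacunary_gaps r k / (16 * 20 ^ Suc k)"
    by (simp only: lacunary_gaps.simps min.cobounded1)
  moreover have "(0::real) < 16 * 20 ^ Suc k" by simp
  ultimately show ?thesis using pos_le_divide_eq by blast
qed

lemma lacunary_gaps_le: "0 < r \<Longrightarrow> lacunary_gaps r k \<le> r"
proof (induction k)
  case (Suc k)
  have "lacunary_gaps r (Suc k) * 1 \<le> lacunary_gaps r (Suc k) * (16 * 20 ^ Suc k)"
    using lacunary_gaps_pos[OF Suc.prems, of "Suc k"] one_le_power[of "20::real" "Suc k"]
    by (intro mult_left_mono) auto
  then show ?case using lacunary_gaps_Suc_le[of r k] Suc by simp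
qed simp

lemma pow_le_ln_lacunary_gaps:
  assumes "0 < r" "r \<le> 1"
  shows "20 ^ k \<le> ln (exp 1 / lacunary_gaps r k)"
proof (cases k)
  case 0
  then show ?thesis using one_le_ln_exp_div[OF assms] by simp
next
  case (Suc m)
  have "lacunary_gaps r k \<le> exp (1 - 20 ^ k)" using Suc by simp
  then have "ln (lacunary_gaps r k) \<le> ln (exp (1 - 20 ^ k))"
    using lacunary_gaps_pos[OF assms(1)] by (subst ln_le_cancel_iff) auto
  then show ?thesis using lacunary_gaps_pos[OF assms(1), of k] by (simp add: ln_div)
qed

lemma exists_norm_ge_on_circle:
  assumes hw: "w holomorphic_on ball 0 1" and r: "cmod z0 < r" "r < 1"
  shows "\<exists>b. cmod b = r \<and> cmod (w z0) \<le> cmod (w b)"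
proof -
  have sub: "cball 0 r \<subseteq> ball 0 1" using r by auto
  have cont: "continuous_on (cball 0 r) w"
    using holomorphic_on_imp_continuous_on holomorphic_on_subset[OF hw sub] by blast
  have "0 \<le> r" using r(1) norm_ge_zero[of z0] by linarith
  then have "sphere (0::complex) r \<noteq> {}" by simp
  then obtain b where b: "b \<in> sphere 0 r" and max: "\<forall>y\<in>sphere 0 r. cmod (w y) \<le> cmod (w b)"
    using continuous_attains_sup[of "sphere 0 r" "\<lambda>z. cmod (w z)"] continuous_on_subset[OF cont]
    by (metis compact_sphere continuous_on_norm sphere_cball)
  have "cmod (w z0) \<le> cmod (w b)"
  proof (rule maximum_modulus_frontier[of w "cball 0 r"])
    show "w holomorphic_on interior (cball 0 r)"
      using holomorphic_on_subset[OF hw] ball_subset_cball sub by (metis interior_cball subset_trans)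
    show "continuous_on (closure (cball 0 r)) w" using cont by simp
  qed (use max r in auto)
  then show ?thesis using b by auto
qed

lemma exists_lacunary_points_norm_ge:
  assumes hw: "w holomorphic_on ball 0 1" and z0: "cmod z0 < 1"
  shows "\<exists>a x. lacunary_points a x \<and> (\<forall>k. cmod (w z0) \<le> cmod (w (a k)))"
proof -
  define r where "r = (1 - cmod z0) / 2"
  have "0 < r" using z0 unfolding r_def by simp
  moreover have "r \<le> 1" unfolding r_def by (simp add: field_simps)
  ultimately have r: "0 < r" "r \<le> 1" .
  define x where "x = lacunary_gaps r"
  have "\<exists>b. cmod b = 1 - x k \<and> cmod (w z0) \<le> cmod (w b)" for k
  proof (rule exists_norm_ge_on_circle[OF hw])
    have "cmod z0 < 1 - r" using z0 unfolding r_def by (simp add: field_simps)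
    then show "cmod z0 < 1 - x k" using lacunary_gaps_le[OF r(1), of k] by (simp add: x_def)
    show "1 - x k < 1" using lacunary_gaps_pos[OF r(1), of k] by (simp add: x_def)
  qed
  then obtain a where a: "\<And>k. cmod (a k) = 1 - x k \<and> cmod (w z0) \<le> cmod (w (a k))" by metis
  have "lacunary_points a x"
    by unfold_locales
      (use a lacunary_gaps_pos[OF r(1)] lacunary_gaps_Suc_le pow_le_ln_lacunary_gaps[OF r] in
        \<open>auto simp: x_def\<close>)
  then show ?thesis using a by blast
qed

section \<open>Logarithmic growth and Bloch functions\<close>

lemma one_le_ln_exp_div_one_minus_norm: "z \<in> ball 0 1 \<Longrightarrow> 1 \<le> ln (exp 1 / (1 - cmod z))"
  by (rule one_le_ln_exp_div) auto

lemma const_in_H_log_infty: "(\<lambda>z. c) \<in> H_log_infty"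
  unfolding H_log_infty_def
proof (intro CollectI conjI exI ballI holomorphic_intros)
  fix z :: complex assume "z \<in> ball 0 1"
  then have L: "1 \<le> ln (exp 1 / (1 - cmod z))" by (rule one_le_ln_exp_div_one_minus_norm)
  then have "cmod c \<le> cmod c * ln (exp 1 / (1 - cmod z))" by (simp add: mult_le_cancel_left1)
  then show "cmod c / ln (exp 1 / (1 - cmod z)) \<le> cmod c" using L by (simp add: pos_divide_le_eq)
qed

lemma H_log_infty_add:
  assumes "f \<in> H_log_infty" "g \<in> H_log_infty"
  shows "(\<lambda>z. f z + g z) \<in> H_log_infty"
proof -
  obtain Cf Cg where hf: "f holomorphic_on ball 0 1" and hg: "g holomorphic_on ball 0 1"
    and Cf: "\<forall>z\<in>ball 0 1. cmod (f z) / ln (exp 1 / (1 - cmod z)) \<le> Cf"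
    and Cg: "\<forall>z\<in>ball 0 1. cmod (g z) / ln (exp 1 / (1 - cmod z)) \<le> Cg"
    using assms unfolding H_log_infty_def by blast
  have "\<forall>z\<in>ball 0 1. cmod (f z + g z) / ln (exp 1 / (1 - cmod z)) \<le> Cf + Cg"
  proof
    fix z :: complex assume z: "z \<in> ball 0 1"
    have "0 < ln (exp 1 / (1 - cmod z))" using one_le_ln_exp_div_one_minus_norm[OF z] by linarith
    then have "cmod (f z + g z) / ln (exp 1 / (1 - cmod z))
        \<le> cmod (f z) / ln (exp 1 / (1 - cmod z)) + cmod (g z) / ln (exp 1 / (1 - cmod z))"
      by (simp add: divide_right_mono norm_triangle_ineq flip: add_divide_distrib)
    then show "cmod (f z + g z) / ln (exp 1 / (1 - cmod z)) \<le> Cf + Cg" using Cf Cg z by fastforce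
  qed
  moreover have "(\<lambda>z. f z + g z) holomorphic_on ball 0 1" using hf hg by (intro holomorphic_intros)
  ultimately show ?thesis unfolding H_log_infty_def by blast
qed

lemma H_log_infty_cmult:
  assumes "f \<in> H_log_infty"
  shows "(\<lambda>z. c * f z) \<in> H_log_infty"
proof -
  obtain C where hf: "f holomorphic_on ball 0 1"
    and C: "\<forall>z\<in>ball 0 1. cmod (f z) / ln (exp 1 / (1 - cmod z)) \<le> C"
    using assms unfolding H_log_infty_def by blast
  have "\<forall>z\<in>ball 0 1. cmod (c * f z) / ln (exp 1 / (1 - cmod z)) \<le> cmod c * C"
    using C by (simp add: norm_mult mult_left_mono flip: times_divide_eq_right)
  moreover have "(\<lambda>z. c * f z) holomorphic_on ball 0 1" using hf by (intro holomorphic_intros)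
  ultimately show ?thesis unfolding H_log_infty_def by blast
qed

lemma Bloch_mult_const:
  assumes "w \<in> Bloch"
  shows "(\<lambda>z. w z * c) \<in> Bloch"
proof -
  obtain C where hw: "w holomorphic_on ball 0 1"
    and C: "\<forall>z\<in>ball 0 1. (1 - (cmod z)\<^sup>2) * cmod (deriv w z) \<le> C"
    using assms unfolding Bloch_def by blast
  have "\<forall>z\<in>ball 0 1. (1 - (cmod z)\<^sup>2) * cmod (deriv (\<lambda>z. w z * c) z) \<le> C * cmod c"
  proof
    fix z :: complex assume z: "z \<in> ball 0 1"
    have "deriv (\<lambda>z. w z * c) z = deriv w z * c"
      using hw z by (intro deriv_cmult_right holomorphic_on_imp_differentiable_at) auto
    then show "(1 - (cmod z)\<^sup>2) * cmod (deriv (\<lambda>z. w z * c) z) \<le> C * cmod c"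
      using C z by (simp add: norm_mult mult_right_mono flip: mult.assoc)
  qed
  moreover have "(\<lambda>z. w z * c) holomorphic_on ball 0 1" using hw by (intro holomorphic_intros)
  ultimately show ?thesis unfolding Bloch_def by blast
qed

lemma Bloch_mult_const_cancel:
  assumes "(\<lambda>z. w z * c) \<in> Bloch" "c \<noteq> 0"
  shows "w \<in> Bloch"
  using Bloch_mult_const[OF assms(1), of "inverse c"] assms(2) by (simp add: mult.assoc)

lemma deriv_weighted_superposition:
  assumes "w field_differentiable at z" "f field_differentiable at z" "\<phi> holomorphic_on UNIV"
  shows "deriv (weighted_superposition \<phi> w f) z
    = deriv w z * \<phi> (f z) + w z * deriv \<phi> (f z) * deriv f z"
proof -
  have "(\<phi> has_field_derivative deriv \<phi> (f z)) (at (f z))"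
    using assms(3) by (intro holomorphic_derivI[OF _ open_UNIV]) auto
  then have "((\<lambda>z. \<phi> (f z)) has_field_derivative deriv \<phi> (f z) * deriv f z) (at z)"
    using assms(2) by (intro DERIV_chain2) (auto simp: field_differentiable_derivI)
  then have "(weighted_superposition \<phi> w f has_field_derivative
      deriv w z * \<phi> (f z) + deriv \<phi> (f z) * deriv f z * w z) (at z)"
    unfolding weighted_superposition_def using assms(1)
    by (intro DERIV_mult) (auto simp: field_differentiable_derivI)
  then show ?thesis by (simp add: DERIV_imp_deriv algebra_simps)
qed

section \<open>Nonconstant symbols\<close>

lemma nonconstant_entire_local_bounds:
  assumes h\<phi>: "\<phi> holomorphic_on UNIV" and nc: "\<not> (\<exists>c. \<forall>z. \<phi> z = c)"
  obtains \<epsilon> m c0 M where "0 < \<epsilon>" "0 < m"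
    "\<And>\<xi>. dist \<xi> c0 \<le> \<epsilon> \<Longrightarrow> m \<le> cmod (deriv \<phi> \<xi>) \<and> cmod (\<phi> \<xi>) \<le> M"
proof -
  have "\<exists>c0. deriv \<phi> c0 \<noteq> 0"
  proof (rule ccontr)
    assume "\<nexists>c0. deriv \<phi> c0 \<noteq> 0"
    then have "(\<phi> has_field_derivative 0) (at z within UNIV)" for z
      using holomorphic_derivI[OF h\<phi> open_UNIV] by fastforce
    then show False
      using has_field_derivative_zero_constant[OF convex_UNIV, of \<phi>] nc by blast
  qed
  then obtain c0 where c0: "deriv \<phi> c0 \<noteq> 0" by blast
  define m where "m = cmod (deriv \<phi> c0) / 2"
  have m: "0 < m" using c0 by (simp add: m_def)
  have "continuous_on UNIV (deriv \<phi>)"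
    using holomorphic_deriv[OF h\<phi> open_UNIV] holomorphic_on_imp_continuous_on by blast
  then have "isCont (deriv \<phi>) c0" by (simp add: continuous_on_eq_continuous_at)
  then obtain d where d: "0 < d" "\<And>\<xi>. dist \<xi> c0 < d \<Longrightarrow> dist (deriv \<phi> \<xi>) (deriv \<phi> c0) < m"
    using m unfolding continuous_at_eps_delta by blast
  define \<epsilon> where "\<epsilon> = d / 2"
  have "continuous_on (cball c0 \<epsilon>) \<phi>"
    using holomorphic_on_imp_continuous_on[OF h\<phi>] by (rule continuous_on_subset) simp
  then have "compact (\<phi> ` cball c0 \<epsilon>)" by (intro compact_continuous_image) auto
  then obtain M where M: "\<forall>y\<in>\<phi> ` cball c0 \<epsilon>. cmod y \<le> M"
    using compact_imp_bounded bounded_iff by metis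
  show ?thesis
  proof (rule that[of \<epsilon> m c0 M])
    show "0 < \<epsilon>" using d by (simp add: \<epsilon>_def)
    fix \<xi> assume \<xi>: "dist \<xi> c0 \<le> \<epsilon>"
    then have "cmod (deriv \<phi> \<xi> - deriv \<phi> c0) < m" using d by (simp add: \<epsilon>_def dist_norm)
    then have "m \<le> cmod (deriv \<phi> \<xi>)"
      using norm_triangle_ineq2[of "deriv \<phi> c0" "deriv \<phi> \<xi>"] by (simp add: m_def norm_minus_commute)
    moreover have "cmod (\<phi> \<xi>) \<le> M" using M \<xi> by (simp add: dist_commute)
    ultimately show "m \<le> cmod (deriv \<phi> \<xi>) \<and> cmod (\<phi> \<xi>) \<le> M" ..
  qed (rule m)
qed

lemma (in lacunary_points) deriv_superposition_test_symbol_ge: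
  assumes hw: "w holomorphic_on ball 0 1" and h\<phi>: "\<phi> holomorphic_on UNIV"
    and \<epsilon>: "0 < \<epsilon>" and m: "0 \<le> m" and \<delta>: "0 \<le> \<delta>" "\<And>k. \<delta> \<le> cmod (w (a k))"
    and near: "\<And>\<xi>. dist \<xi> c0 \<le> \<epsilon> \<Longrightarrow> m \<le> cmod (deriv \<phi> \<xi>) \<and> cmod (\<phi> \<xi>) \<le> M"
  defines "f \<equiv> \<lambda>z. c0 + of_real \<epsilon> * test_function a z"
  shows "\<delta> * m * \<epsilon> * (2 * 10 ^ j - 12) \<le> 3 * ((1 - (cmod (a j))\<^sup>2) *
           (cmod (deriv (weighted_superposition \<phi> w f) (a j)) + cmod (deriv w (a j)) * M))"
proof -
  define K where "K = 1 - (cmod (a j))\<^sup>2"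
  define F where "F = test_function a"
  have aj: "a j \<in> ball 0 1" using norm_a_less_1[of j] by simp
  have K: "0 \<le> K" unfolding K_def using norm_a_le_1[of j] by (simp add: abs_square_le_1)
  have dF: "(F has_field_derivative deriv F (a j)) (at (a j))"
    unfolding F_def using test_function_has_field_derivative(2)[OF norm_a_less_1]
    by (metis DERIV_imp_deriv)
  have df: "(f has_field_derivative of_real \<epsilon> * deriv F (a j)) (at (a j))"
    unfolding f_def F_def[symmetric] by (auto intro!: derivative_eq_intros dF)
  have "dist (f (a j)) c0 \<le> \<epsilon>"
    using norm_test_function_at_a[of j] \<epsilon> by (simp add: f_def dist_norm norm_mult)
  then have \<phi>f: "m \<le> cmod (deriv \<phi> (f (a j)))" "cmod (\<phi> (f (a j))) \<le> M" using near by auto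
  have "deriv (weighted_superposition \<phi> w f) (a j)
      = deriv w (a j) * \<phi> (f (a j)) + w (a j) * deriv \<phi> (f (a j)) * deriv f (a j)"
  proof (rule deriv_weighted_superposition[OF _ _ h\<phi>])
    show "w field_differentiable at (a j)" using hw aj holomorphic_on_imp_differentiable_at by blast
    show "f field_differentiable at (a j)" using df field_differentiable_def by blast
  qed
  then have "cmod (w (a j) * deriv \<phi> (f (a j)) * deriv f (a j))
      \<le> cmod (deriv (weighted_superposition \<phi> w f) (a j)) + cmod (deriv w (a j)) * M"
    using norm_triangle_ineq4[of "deriv (weighted_superposition \<phi> w f) (a j)" "deriv w (a j) * \<phi> (f (a j))"]
      mult_left_mono[OF \<phi>f(2) norm_ge_zero[of "deriv w (a j)"]]
    by (simp add: norm_mult)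
  from mult_left_mono[OF this K]
  have upper: "K * cmod (w (a j) * deriv \<phi> (f (a j)) * deriv f (a j))
      \<le> K * (cmod (deriv (weighted_superposition \<phi> w f) (a j)) + cmod (deriv w (a j)) * M)" .
  define X where "X = K * cmod (deriv F (a j))"
  have X: "0 \<le> X" using K by (simp add: X_def)
  have coef: "\<delta> * m * \<epsilon> \<le> cmod (w (a j)) * cmod (deriv \<phi> (f (a j))) * \<epsilon>"
    using \<delta> \<phi>f m \<epsilon> by (intro mult_right_mono mult_mono) auto
  have "\<delta> * m * \<epsilon> * (2 * 10 ^ j - 12) \<le> \<delta> * m * \<epsilon> * (3 * X)"
    using deriv_test_function_at_a[of j] \<delta>(1) m \<epsilon> unfolding X_def K_def F_def by (intro mult_left_mono) auto
  also have "\<dots> = 3 * (\<delta> * m * \<epsilon> * X)" by simp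
  also have "\<dots> \<le> 3 * (cmod (w (a j)) * cmod (deriv \<phi> (f (a j))) * \<epsilon> * X)"
    using mult_right_mono[OF coef X] by simp
  also have "\<dots> = 3 * (K * cmod (w (a j) * deriv \<phi> (f (a j)) * deriv f (a j)))"
    using \<epsilon> by (simp add: X_def DERIV_imp_deriv[OF df] norm_mult mult_ac)
  also have "\<dots> \<le> 3 * (K * (cmod (deriv (weighted_superposition \<phi> w f) (a j)) + cmod (deriv w (a j)) * M))"
    using upper by simp
  finally show ?thesis unfolding K_def .
qed

lemma superposition_into_Bloch_imp_constant:
  assumes hw: "w holomorphic_on ball 0 1" and z0: "cmod z0 < 1" "w z0 \<noteq> 0"
    and h\<phi>: "\<phi> holomorphic_on UNIV" and wB: "w \<in> Bloch"
    and H: "\<forall>f\<in>H_log_infty. weighted_superposition \<phi> w f \<in> Bloch"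
  shows "\<exists>c. \<forall>z. \<phi> z = c"
proof (rule ccontr)
  assume nc: "\<not> (\<exists>c. \<forall>z. \<phi> z = c)"
  obtain \<epsilon> m c0 M where \<epsilon>: "0 < \<epsilon>" and m: "0 < m"
    and near: "\<And>\<xi>. dist \<xi> c0 \<le> \<epsilon> \<Longrightarrow> m \<le> cmod (deriv \<phi> \<xi>) \<and> cmod (\<phi> \<xi>) \<le> M"
    using nonconstant_entire_local_bounds[OF h\<phi> nc] by metis
  obtain a x where "lacunary_points a x" and wa: "\<And>k. cmod (w z0) \<le> cmod (w (a k))"
    using exists_lacunary_points_norm_ge[OF hw z0(1)] by blast
  interpret lacunary_points a x by fact
  define f where "f = (\<lambda>z. c0 + of_real \<epsilon> * test_function a z)"
  have "f \<in> H_log_infty"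
    unfolding f_def
    by (intro H_log_infty_add H_log_infty_cmult const_in_H_log_infty test_function_in_H_log_infty)
  then obtain Cg where Cg: "\<forall>z\<in>ball 0 1. (1 - (cmod z)\<^sup>2) * cmod (deriv (weighted_superposition \<phi> w f) z) \<le> Cg"
    using H unfolding Bloch_def by blast
  obtain Cw where Cw: "\<forall>z\<in>ball 0 1. (1 - (cmod z)\<^sup>2) * cmod (deriv w z) \<le> Cw"
    using wB unfolding Bloch_def by blast
  have "cmod (\<phi> c0) \<le> M" using near[of c0] \<epsilon> by simp
  then have M: "0 \<le> M" by (rule order_trans[OF norm_ge_zero])
  define P where "P = cmod (w z0) * m * \<epsilon>"
  have P: "0 < P" using z0(2) m \<epsilon> by (simp add: P_def)
  have "P * (2 * 10 ^ j - 12) \<le> 3 * (Cg + Cw * M)" for j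
  proof -
    have aj: "a j \<in> ball 0 1" using norm_a_less_1[of j] by simp
    have "P * (2 * 10 ^ j - 12) \<le> 3 * ((1 - (cmod (a j))\<^sup>2) *
        (cmod (deriv (weighted_superposition \<phi> w f) (a j)) + cmod (deriv w (a j)) * M))"
      unfolding P_def f_def using m \<epsilon> wa
      by (intro deriv_superposition_test_symbol_ge[OF hw h\<phi> _ _ _ _ near]) auto
    also have "\<dots> \<le> 3 * (Cg + Cw * M)"
    proof -
      have "(1 - (cmod (a j))\<^sup>2) * cmod (deriv (weighted_superposition \<phi> w f) (a j)) \<le> Cg"
        using Cg aj by blast
      moreover have "(1 - (cmod (a j))\<^sup>2) * cmod (deriv w (a j)) * M \<le> Cw * M"
        using Cw aj M by (simp add: mult_right_mono)
      ultimately show ?thesis by (simp add: distrib_left mult.assoc)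
    qed
    finally show ?thesis .
  qed
  moreover obtain j where "(3 * (Cg + Cw * M) / P + 12) / 2 < 10 ^ j"
    using real_arch_pow[of 10 "(3 * (Cg + Cw * M) / P + 12) / 2"] by auto
  then have "3 * (Cg + Cw * M) < P * (2 * 10 ^ j - 12)" using P by (simp add: field_simps)
  ultimately show False by (meson not_le)
qed

theorem corollary2:
  fixes w \<phi> :: "complex \<Rightarrow> complex"
  assumes "w holomorphic_on ball 0 1"
    and "\<exists>z\<in>ball 0 1. w z \<noteq> 0"
    and "\<phi> holomorphic_on UNIV"
    and "\<exists>z. \<phi> z \<noteq> 0"
  shows "(\<forall>f\<in>H_log_infty. weighted_superposition \<phi> w f \<in> Bloch) \<longleftrightarrow>
         (w \<in> Bloch \<and> (\<exists>c. \<forall>z. \<phi> z = c))"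
proof
  assume H: "\<forall>f\<in>H_log_infty. weighted_superposition \<phi> w f \<in> Bloch"
  obtain c where "\<phi> c \<noteq> 0" using assms(4) by blast
  moreover have "(\<lambda>z. w z * \<phi> c) \<in> Bloch"
    using H const_in_H_log_infty[of c] by (auto simp: weighted_superposition_def)
  ultimately have wB: "w \<in> Bloch" by (rule Bloch_mult_const_cancel[rotated])
  obtain z0 where "cmod z0 < 1" "w z0 \<noteq> 0" using assms(2) by auto
  then show "w \<in> Bloch \<and> (\<exists>c. \<forall>z. \<phi> z = c)"
    using wB superposition_into_Bloch_imp_constant[OF assms(1) _ _ assms(3) wB H] by blast
next
  assume "w \<in> Bloch \<and> (\<exists>c. \<forall>z. \<phi> z = c)"
  then obtain c where "w \<in> Bloch" "\<And>z. \<phi> z = c" by blast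
  then show "\<forall>f\<in>H_log_infty. weighted_superposition \<phi> w f \<in> Bloch"
    using Bloch_mult_const by (simp add: weighted_superposition_def)
qed

end
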